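(* Let $(X,\mathscr{L}_X)$ and $(Y,\mathscr{L}_Y)$ be weak Lipschitz spaces and let $f: X\to Y$ be a weak Lipschitz map. Then $f$ is continuous with respect to the topologies $\widehat{\tau}(\mathscr{L}_X)$ on $X$ and $\widehat{\tau}(\mathscr{L}_Y)$ on $Y$.
   Context: A weak pseudo-metric on a set $Z$ is a symmetric map $d: Z\times Z\to[0,\infty)$ satisfying $d(z_1,z_2)\le d(z_1,z)+d(z,z_2)$ for all $z,z_1,z_2$ and vanishing at at least one point of the diagonal (not necessarily on the whole diagonal). A weak Lipschitz structure for $Z$ is a non-empty family $\mathscr{L}$ of weak pseudo-metrics on $Z$ such that (L1) if $d$ is a weak pseudo-metric with $d\le d_1$ for some $d_1\in\mathscr{L}$ then $d\in\mathscr{L}$; (L2) $d\in\mathscr{L}$ implies $\alpha d\in\mathscr{L}$ for all real $\alpha>0$; (L3) $d_1,d_2\in\mathscr{L}$ imply $d_1\vee d_2\in\mathscr{L}$; the pair $(Z,\mathscr{L})$ is a weak Lipschitz space. $\widehat{\tau}(\mathscr{L})$ is the topology on $Z$ generated (as a subbase) by the sets $U_{d,\varepsilon}(z)=\{\xi\in Z: d(\xi,z)<\varepsilon\}$ with $d\in\mathscr{L}$, $z\in Z$, and real $\varepsilon>d(z,z)$. A map $f:X\to Y$ is a weak Lipschitz map if for every $d_Y\in\mathscr{L}_Y$ there is $d_X\in\mathscr{L}_X$ with $d_Y(f(x_1),f(x_2))\le d_X(x_1,x_2)$ for all $x_1,x_2\in X$. *)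

theory Defs
  imports "HOL-Analysis.Analysis"
begin

text \<open>Weak pseudo-metric on the whole type 'a (the set Z is the universe of 'a).\<close>
definition weak_pseudo_metric :: "('a \<Rightarrow> 'a \<Rightarrow> real) \<Rightarrow> bool" where
  "weak_pseudo_metric d \<longleftrightarrow>
     (\<forall>x y. 0 \<le> d x y) \<and>
     (\<forall>x y. d x y = d y x) \<and>
     (\<forall>z z1 z2. d z1 z2 \<le> d z1 z + d z z2) \<and>
     (\<exists>z. d z z = 0)"

definition weak_lipschitz_structure :: "('a \<Rightarrow> 'a \<Rightarrow> real) set \<Rightarrow> bool" where
  "weak_lipschitz_structure L \<longleftrightarrow>
     L \<noteq> {} \<and>
     (\<forall>d\<in>L. weak_pseudo_metric d) \<and>
     (\<forall>d d1. weak_pseudo_metric d \<and> d1 \<in> L \<and> (\<forall>x y. d x y \<le> d1 x y) \<longrightarrow> d \<in> L) \<and>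
     (\<forall>d\<in>L. \<forall>\<alpha>::real. \<alpha> > 0 \<longrightarrow> (\<lambda>x y. \<alpha> * d x y) \<in> L) \<and>
     (\<forall>d1\<in>L. \<forall>d2\<in>L. (\<lambda>x y. max (d1 x y) (d2 x y)) \<in> L)"

text \<open>The subbase of \<open>\<tau>(L)\<close>; UNIV is added so that the generated topology lives on all of Z
  (the empty intersection of subbasic sets).\<close>
definition lip_subbase :: "('a \<Rightarrow> 'a \<Rightarrow> real) set \<Rightarrow> 'a set set" where
  "lip_subbase L = insert UNIV
     {{\<xi>. d \<xi> z < \<epsilon>} | d z \<epsilon>. d \<in> L \<and> \<epsilon> > d z z}"

definition lip_topology :: "('a \<Rightarrow> 'a \<Rightarrow> real) set \<Rightarrow> 'a topology" where
  "lip_topology L = topology_generated_by (lip_subbase L)"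

definition weak_lipschitz_map ::
  "('a \<Rightarrow> 'a \<Rightarrow> real) set \<Rightarrow> ('b \<Rightarrow> 'b \<Rightarrow> real) set \<Rightarrow> ('a \<Rightarrow> 'b) \<Rightarrow> bool" where
  "weak_lipschitz_map LX LY f \<longleftrightarrow>
     (\<forall>dY\<in>LY. \<exists>dX\<in>LX. \<forall>x1 x2. dY (f x1) (f x2) \<le> dX x1 x2)"

end

(* The preimage under f of a subbasic ball {d(-, z) < eps} of Y is a sublevel set of
   x |-> d(f x, z). By the reverse triangle inequality this function varies by at most some
   dX in LX, and every such sublevel set is open in X. *)

theory Submission
  imports Defs
begin

lemma weak_pseudo_metric_abs_diff: "weak_pseudo_metric (\<lambda>x y. \<bar>g x - g y\<bar>)"
  unfolding weak_pseudo_metric_def by auto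

lemma weak_pseudo_metric_abs_diff_le:
  assumes "weak_pseudo_metric d"
  shows "\<bar>d x z - d y z\<bar> \<le> d x y"
proof -
  have "d x z \<le> d x y + d y z" "d y z \<le> d y x + d x z" "d y x = d x y"
    using assms unfolding weak_pseudo_metric_def by blast+
  then show ?thesis by linarith
qed

lemma weak_lipschitz_structure_downward_closed:
  assumes "weak_lipschitz_structure L" and "d1 \<in> L" and "weak_pseudo_metric d"
    and "\<And>x y. d x y \<le> d1 x y"
  shows "d \<in> L"
  using assms unfolding weak_lipschitz_structure_def by blast

lemma weak_lipschitz_structure_weak_pseudo_metric:
  assumes "weak_lipschitz_structure L" and "d \<in> L"
  shows "weak_pseudo_metric d"
  using assms unfolding weak_lipschitz_structure_def by blast

lemma topspace_lip_topology [simp]: "topspace (lip_topology L) = UNIV"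
  unfolding lip_topology_def lip_subbase_def by auto

lemma openin_lip_topology_ball:
  assumes "d \<in> L" and "d z z < \<epsilon>"
  shows "openin (lip_topology L) {\<xi>. d \<xi> z < \<epsilon>}"
  unfolding lip_topology_def
  by (rule topology_generated_by_Basis) (use assms in \<open>auto simp: lip_subbase_def\<close>)

text \<open>The pseudo-metric \<open>\<bar>g x - g y\<bar>\<close> vanishes on the whole diagonal, so its balls of
  every positive radius are subbasic.\<close>

lemma openin_lip_topology_sublevel:
  assumes L: "weak_lipschitz_structure L" and "d \<in> L"
    and dominated: "\<And>x y. \<bar>g x - g y\<bar> \<le> d x y"
  shows "openin (lip_topology L) {x. g x < \<epsilon>}"
proof (subst openin_subopen, intro ballI)
  fix x\<^sub>0 assume "x\<^sub>0 \<in> {x. g x < \<epsilon>}"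
  then have radius_pos: "0 < \<epsilon> - g x\<^sub>0" by simp
  have "(\<lambda>x y. \<bar>g x - g y\<bar>) \<in> L"
    using weak_lipschitz_structure_downward_closed[OF L \<open>d \<in> L\<close> weak_pseudo_metric_abs_diff]
      dominated .
  then have "openin (lip_topology L) {\<xi>. \<bar>g \<xi> - g x\<^sub>0\<bar> < \<epsilon> - g x\<^sub>0}"
    using openin_lip_topology_ball[where d = "\<lambda>x y. \<bar>g x - g y\<bar>"] radius_pos by simp
  moreover have "{\<xi>. \<bar>g \<xi> - g x\<^sub>0\<bar> < \<epsilon> - g x\<^sub>0} \<subseteq> {x. g x < \<epsilon>}" by auto
  moreover have "x\<^sub>0 \<in> {\<xi>. \<bar>g \<xi> - g x\<^sub>0\<bar> < \<epsilon> - g x\<^sub>0}" using radius_pos by simp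
  ultimately show "\<exists>T. openin (lip_topology L) T \<and> x\<^sub>0 \<in> T \<and> T \<subseteq> {x. g x < \<epsilon>}"
    by blast
qed

theorem theorem4p5:
  fixes LX :: "('a \<Rightarrow> 'a \<Rightarrow> real) set" and LY :: "('b \<Rightarrow> 'b \<Rightarrow> real) set"
    and f :: "'a \<Rightarrow> 'b"
  assumes "weak_lipschitz_structure LX" and "weak_lipschitz_structure LY"
    and "weak_lipschitz_map LX LY f"
  shows "continuous_map (lip_topology LX) (lip_topology LY) f"
  unfolding lip_topology_def[of LY]
proof (rule continuous_on_generated_topo)
  show "f ` topspace (lip_topology LX) \<subseteq> \<Union> (lip_subbase LY)"
    by (auto simp: lip_subbase_def)
next
  fix U assume "U \<in> lip_subbase LY"
  then consider "U = UNIV"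
    | d z \<epsilon> where "d \<in> LY" and "U = {\<xi>. d \<xi> z < \<epsilon>}"
    unfolding lip_subbase_def by auto
  then show "openin (lip_topology LX) (f -` U \<inter> topspace (lip_topology LX))"
  proof cases
    case 1
    then show ?thesis by (metis openin_topspace topspace_lip_topology vimage_UNIV Int_UNIV_left)
  next
    case (2 d z \<epsilon>)
    obtain dX where "dX \<in> LX" and f_lipschitz: "\<And>x y. d (f x) (f y) \<le> dX x y"
      using assms(3) \<open>d \<in> LY\<close> unfolding weak_lipschitz_map_def by blast
    have "weak_pseudo_metric d"
      using weak_lipschitz_structure_weak_pseudo_metric[OF assms(2) \<open>d \<in> LY\<close>] .
    from weak_pseudo_metric_abs_diff_le[OF this] f_lipschitz
    have "\<bar>d (f x) z - d (f y) z\<bar> \<le> dX x y" for x y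
      by (meson order_trans)
    then have "openin (lip_topology LX) {x. d (f x) z < \<epsilon>}"
      by (rule openin_lip_topology_sublevel[OF assms(1) \<open>dX \<in> LX\<close>])
    then show ?thesis using 2 by (simp add: vimage_def)
  qed
qed

end
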